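(* Let $S\subseteq\mathbb{R}^n$ be closed, $\bar x\in S$ and $d\in T_S(\bar x)$. Then $$N_{T_S^2(\bar x;d)}(w)\subseteq N_S(\bar x;d)\ \ \forall w\in T_S^2(\bar x;d),\qquad N_{T_S^{''}(\bar x;d)}(w)\subseteq N_S(\bar x;d)\ \ \forall w\in T_S^{''}(\bar x;d).$$
   Context: $T_S(\bar x)$ is the Bouligand tangent cone. $T_S^2(\bar x;d):=\{w\mid \exists t_k\downarrow 0,\ w_k\to w,\ \bar x+t_kd+\tfrac12 t_k^2w_k\in S\}$; $T_S^{''}(\bar x;d):=\{w\mid \exists (t_k,r_k)\downarrow(0,0),\ w_k\to w,\ t_k/r_k\to0,\ \bar x+t_kd+\tfrac12 t_kr_kw_k\in S\}$. For a closed set $A$, $\hat N_A(x)$ is the Fréchet normal cone ($\hat N_A(x)=\emptyset$ if $x\notin A$), $N_A(x)=\limsup_{x'\to_A x}\hat N_A(x')$ is the limiting normal cone. The directional limiting normal cone is $N_S(\bar x;d):=\limsup_{t\downarrow0,\,d'\to d}\hat N_S(\bar x+td')$ (Painlevé–Kuratowski outer limit). *)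

theory Defs
  imports "HOL-Analysis.Analysis"
begin

definition tangent_cone :: "'a::euclidean_space set \<Rightarrow> 'a \<Rightarrow> 'a set" where
  "tangent_cone S x = {d. \<exists>t dk. (\<forall>k. t k > 0) \<and> t \<longlonglongrightarrow> 0 \<and> dk \<longlonglongrightarrow> d \<and>
       (\<forall>k. x + t k *\<^sub>R dk k \<in> S)}"

definition second_tangent_set :: "'a::euclidean_space set \<Rightarrow> 'a \<Rightarrow> 'a \<Rightarrow> 'a set" where
  "second_tangent_set S x d = {w. \<exists>t wk. (\<forall>k. t k > 0) \<and> t \<longlonglongrightarrow> 0 \<and> wk \<longlonglongrightarrow> w \<and>
       (\<forall>k. x + t k *\<^sub>R d + ((1/2) * (t k)\<^sup>2) *\<^sub>R wk k \<in> S)}"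

definition asymptotic_second_tangent_cone :: "'a::euclidean_space set \<Rightarrow> 'a \<Rightarrow> 'a \<Rightarrow> 'a set" where
  "asymptotic_second_tangent_cone S x d = {w. \<exists>t r wk. (\<forall>k. t k > 0 \<and> r k > 0) \<and>
       t \<longlonglongrightarrow> 0 \<and> r \<longlonglongrightarrow> 0 \<and> wk \<longlonglongrightarrow> w \<and> (\<lambda>k. t k / r k) \<longlonglongrightarrow> 0 \<and>
       (\<forall>k. x + t k *\<^sub>R d + ((1/2) * t k * r k) *\<^sub>R wk k \<in> S)}"

definition frechet_normal_cone :: "'a::euclidean_space set \<Rightarrow> 'a \<Rightarrow> 'a set" where
  "frechet_normal_cone A x = (if x \<in> A then {v. \<forall>\<epsilon>>0. \<exists>\<delta>>0. \<forall>y\<in>A. norm (y - x) < \<delta> \<longrightarrow>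
       inner v (y - x) \<le> \<epsilon> * norm (y - x)} else {})"

definition limiting_normal_cone :: "'a::euclidean_space set \<Rightarrow> 'a \<Rightarrow> 'a set" where
  "limiting_normal_cone A x = {v. \<exists>xk vk. (\<forall>k. xk k \<in> A \<and> vk k \<in> frechet_normal_cone A (xk k)) \<and>
       xk \<longlonglongrightarrow> x \<and> vk \<longlonglongrightarrow> v}"

definition directional_normal_cone :: "'a::euclidean_space set \<Rightarrow> 'a \<Rightarrow> 'a \<Rightarrow> 'a set" where
  "directional_normal_cone S x d = {v. \<exists>t dk vk. (\<forall>k. t k > 0) \<and> t \<longlonglongrightarrow> 0 \<and> dk \<longlonglongrightarrow> d \<and>
       vk \<longlonglongrightarrow> v \<and> (\<forall>k. vk k \<in> frechet_normal_cone S (x + t k *\<^sub>R dk k))}"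

end

theory Submission
  imports Defs
begin

text \<open>Let \<open>v\<close> be a Frechet normal to the second-order set \<open>A\<close> at \<open>w\<close>, and describe \<open>A\<close>
  through rescaled copies \<open>S\<^sub>k\<close> of \<open>S\<close>: \<open>w'\<close> lies in \<open>S\<^sub>k\<close> iff \<open>x + t\<^sub>k d + t\<^sub>k s\<^sub>k w' \<in> S\<close>.
  Project \<open>q = w + \<tau> v\<close> (for small \<open>\<tau>\<close>) onto \<open>S\<^sub>k\<close>. A cluster point of the projections
  lies in \<open>A\<close> and is no farther from \<open>q\<close> than \<open>w\<close> is; the Frechet inequality then forces it
  close to \<open>w\<close>, so the proximal normals \<open>(q - p\<^sub>k)/\<tau>\<close> of \<open>S\<^sub>k\<close> are close to \<open>v\<close>. Undoing the
  rescaling, they are Frechet normals to \<open>S\<close> at \<open>x + t\<^sub>k (d + s\<^sub>k p\<^sub>k)\<close> with \<open>t\<^sub>k \<rightarrow> 0\<close> and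
  \<open>d + s\<^sub>k p\<^sub>k \<rightarrow> d\<close>, hence \<open>v\<close> is a directional normal. This cone is closed, so it also contains
  the limiting normals.\<close>

lemma frechet_normal_cone_imp_mem:
  "v \<in> frechet_normal_cone A w \<Longrightarrow> w \<in> A"
  by (simp add: frechet_normal_cone_def split: if_splits)

lemma frechet_normal_coneD:
  assumes "v \<in> frechet_normal_cone A w" and "e > 0"
  shows "\<exists>\<delta>>0. \<forall>y\<in>A. norm (y - w) < \<delta> \<longrightarrow> inner v (y - w) \<le> e * norm (y - w)"
  using assms by (simp add: frechet_normal_cone_def split: if_splits)

lemma frechet_normal_cone_affine_vimage:
  fixes S :: "'a::euclidean_space set"
  assumes c: "c > 0" and u: "u \<in> frechet_normal_cone ((\<lambda>y. b + c *\<^sub>R y) -` S) p"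
  shows "u \<in> frechet_normal_cone S (b + c *\<^sub>R p)"
  unfolding frechet_normal_cone_def
proof (simp, intro conjI allI impI)
  show pS: "b + c *\<^sub>R p \<in> S" using u frechet_normal_cone_imp_mem by blast
  fix e :: real assume e: "e > 0"
  obtain \<delta> where \<delta>: "\<delta> > 0" and h\<delta>: "\<forall>y\<in>(\<lambda>y. b + c *\<^sub>R y) -` S. norm (y - p) < \<delta> \<longrightarrow>
       inner u (y - p) \<le> e * norm (y - p)"
    using frechet_normal_coneD[OF u e] by blast
  show "\<exists>\<delta>>0. \<forall>z\<in>S. norm (z - (b + c *\<^sub>R p)) < \<delta> \<longrightarrow>
          inner u (z - (b + c *\<^sub>R p)) \<le> e * norm (z - (b + c *\<^sub>R p))"
  proof (intro exI[of _ "c * \<delta>"] conjI ballI impI)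
    show "0 < c * \<delta>" using c \<delta> by simp
    fix z assume z: "z \<in> S" and nz: "norm (z - (b + c *\<^sub>R p)) < c * \<delta>"
    define y where "y = (1/c) *\<^sub>R (z - b)"
    have zy: "z - (b + c *\<^sub>R p) = c *\<^sub>R (y - p)" using c by (simp add: y_def algebra_simps)
    have "y \<in> (\<lambda>y. b + c *\<^sub>R y) -` S" using z c by (simp add: y_def)
    moreover have "norm (y - p) < \<delta>" using nz c zy by (simp add: mult_less_cancel_left_pos)
    ultimately have "inner u (y - p) \<le> e * norm (y - p)" using h\<delta> by blast
    then have "c * inner u (y - p) \<le> c * (e * norm (y - p))" using c by simp
    then show "inner u (z - (b + c *\<^sub>R p)) \<le> e * norm (z - (b + c *\<^sub>R p))"
      using c by (simp only: zy inner_scaleR_right norm_scaleR abs_of_pos) (simp add: algebra_simps)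
  qed
qed

lemma proximal_normal_in_frechet_normal_cone:
  fixes C :: "'a::euclidean_space set"
  assumes pC: "p \<in> C" and nearest: "\<forall>y\<in>C. dist q p \<le> dist q y" and \<tau>: "\<tau> > 0"
  shows "(1/\<tau>) *\<^sub>R (q - p) \<in> frechet_normal_cone C p"
  unfolding frechet_normal_cone_def
proof (simp add: pC, intro allI impI)
  fix e :: real assume e: "e > 0"
  show "\<exists>\<delta>>0. \<forall>y\<in>C. norm (y - p) < \<delta> \<longrightarrow> inner (q - p) (y - p) / \<tau> \<le> e * norm (y - p)"
  proof (intro exI[of _ "2*\<tau>*e"] conjI ballI impI)
    show "0 < 2*\<tau>*e" using \<tau> e by simp
    fix y assume y: "y \<in> C" and ny: "norm (y - p) < 2*\<tau>*e"
    have "norm (q - p) \<le> norm ((q - p) - (y - p))"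
      using nearest y by (simp add: dist_norm)
    then have "norm (q - p)^2 \<le> norm ((q - p) - (y - p))^2"
      by (rule power_mono[OF _ norm_ge_zero])
    then have "2 * inner (q - p) (y - p) \<le> norm (y - p)^2"
      by (simp add: power2_norm_eq_inner inner_diff inner_commute algebra_simps)
    also have "\<dots> \<le> 2*\<tau>*e * norm (y - p)"
      using ny by (simp add: power2_eq_square mult_right_mono)
    finally show "inner (q - p) (y - p) / \<tau> \<le> e * norm (y - p)"
      using \<tau> by (simp add: pos_divide_le_eq algebra_simps)
  qed
qed

lemma proximal_normal_estimate:
  fixes v w p :: "'a::real_inner"
  assumes frechet: "inner v (p - w) \<le> e * norm (p - w)"
    and closer: "dist (w + \<tau> *\<^sub>R v) p \<le> \<tau> * norm v" and \<tau>: "\<tau> > 0" and e: "e \<ge> 0"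
  shows "norm ((1/\<tau>) *\<^sub>R (w + \<tau> *\<^sub>R v - p) - v) \<le> 2 * e"
proof -
  define a where "a = p - w"
  have "norm (\<tau> *\<^sub>R v - a) \<le> \<tau> * norm v"
    using closer by (simp add: a_def dist_norm algebra_simps)
  then have "norm (\<tau> *\<^sub>R v - a)^2 \<le> (\<tau> * norm v)^2"
    by (rule power_mono[OF _ norm_ge_zero])
  moreover have "norm (\<tau> *\<^sub>R v - a)^2 = (\<tau> * norm v)^2 - 2 * \<tau> * inner v a + norm a ^ 2"
    by (simp add: power2_norm_eq_inner inner_commute power_mult_distrib algebra_simps)
      (simp add: power2_eq_square)
  ultimately have "norm a ^ 2 \<le> 2 * \<tau> * inner v a"
    by linarith
  also have "\<dots> \<le> 2 * \<tau> * (e * norm a)"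
    using frechet \<tau> by (simp add: a_def)
  finally have "norm a * norm a \<le> (2 * \<tau> * e) * norm a"
    by (simp add: power2_eq_square algebra_simps)
  then have "norm a \<le> 2 * \<tau> * e"
    using \<tau> e by (metis mult_right_le_imp_le order_le_less norm_ge_zero mult_nonneg_nonneg
        zero_le_numeral less_imp_le)
  moreover have "(1/\<tau>) *\<^sub>R (w + \<tau> *\<^sub>R v - p) - v = - ((1/\<tau>) *\<^sub>R a)"
    using \<tau> by (simp add: a_def algebra_simps)
  ultimately show ?thesis
    using \<tau> by (simp add: divide_le_eq mult_ac)
qed

lemma nearest_points_cluster_in_outer_limit:
  fixes Sk :: "nat \<Rightarrow> 'a::euclidean_space set"
  assumes closed: "\<And>k. closed (Sk k)"
    and wk: "\<And>k. wk k \<in> Sk k" and wk_lim: "wk \<longlonglongrightarrow> w"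
    and outer_limit: "\<forall>r p pb. strict_mono r \<and> (\<forall>k. p k \<in> Sk (r k)) \<and> p \<longlonglongrightarrow> pb \<longrightarrow> pb \<in> A"
  obtains p r pb where "\<And>k. p k \<in> Sk k" "\<And>k. \<forall>z\<in>Sk k. dist q (p k) \<le> dist q z"
    "strict_mono r" "(p \<circ> r) \<longlonglongrightarrow> pb" "pb \<in> A" "dist q pb \<le> dist q w"
proof -
  have "\<forall>k. \<exists>y. y \<in> Sk k \<and> (\<forall>z\<in>Sk k. dist q y \<le> dist q z)"
  proof
    fix k
    have "Sk k \<noteq> {}" using wk by blast
    then obtain y where "y \<in> Sk k" "\<And>z. z \<in> Sk k \<Longrightarrow> dist q y \<le> dist q z"
      using distance_attains_inf[OF closed] by metis
    then show "\<exists>y. y \<in> Sk k \<and> (\<forall>z\<in>Sk k. dist q y \<le> dist q z)" by blast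
  qed
  then obtain p where p: "\<And>k. p k \<in> Sk k" and nearest: "\<And>k. \<forall>z\<in>Sk k. dist q (p k) \<le> dist q z"
    by (metis (mono_tags))
  obtain B where "\<forall>y\<in>range wk. dist q y \<le> B"
    using convergent_imp_bounded[OF wk_lim] bounded_any_center by metis
  then have "\<forall>k. p k \<in> cball q B"
    using nearest wk by (metis mem_cball order_trans rangeI)
  then obtain r pb where r: "strict_mono r" and p_lim: "(p \<circ> r) \<longlonglongrightarrow> pb"
    using compact_cball[THEN compact_imp_seq_compact, THEN seq_compactE] by metis
  have "pb \<in> A"
    using outer_limit[rule_format, of r "\<lambda>k. p (r k)" pb] r p p_lim by (simp add: comp_def)
  moreover have "dist q pb \<le> dist q w"
  proof (rule LIMSEQ_le)
    show "(\<lambda>k. dist q ((p \<circ> r) k)) \<longlonglongrightarrow> dist q pb" by (intro tendsto_intros p_lim)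
    show "(\<lambda>k. dist q ((wk \<circ> r) k)) \<longlonglongrightarrow> dist q w"
      by (intro tendsto_intros LIMSEQ_subseq_LIMSEQ[OF wk_lim r])
    show "\<exists>N. \<forall>k\<ge>N. dist q ((p \<circ> r) k) \<le> dist q ((wk \<circ> r) k)"
      using nearest wk by auto
  qed
  ultimately show ?thesis
    using that p nearest r p_lim by blast
qed

lemma frechet_normal_approx_by_proximal_normals:
  fixes Sk :: "nat \<Rightarrow> 'a::euclidean_space set"
  assumes closed: "\<And>k. closed (Sk k)"
    and wk: "\<And>k. wk k \<in> Sk k" and wk_lim: "wk \<longlonglongrightarrow> w"
    and outer_limit: "\<forall>r p pb. strict_mono r \<and> (\<forall>k. p k \<in> Sk (r k)) \<and> p \<longlonglongrightarrow> pb \<longrightarrow> pb \<in> A"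
    and v: "v \<in> frechet_normal_cone A w" and \<epsilon>: "\<epsilon> > 0"
  obtains r p pb where "strict_mono r" "\<And>k. p k \<in> Sk (r k)" "p \<longlonglongrightarrow> pb"
    "\<forall>\<^sub>F k in sequentially. \<exists>u. dist u v < \<epsilon> \<and> u \<in> frechet_normal_cone (Sk (r k)) (p k)"
proof -
  obtain \<delta> where \<delta>: "\<delta> > 0" and frechet: "\<forall>y\<in>A. norm (y - w) < \<delta> \<longrightarrow>
      inner v (y - w) \<le> (\<epsilon>/3) * norm (y - w)"
    using frechet_normal_coneD[OF v, of "\<epsilon>/3"] \<epsilon> by auto
  define c where "c = 2 * (norm v + 1)"
  define \<tau> where "\<tau> = \<delta> / c"
  have c: "c > 0" unfolding c_def by (smt (verit) norm_ge_zero)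
  have \<tau>: "\<tau> > 0" using \<delta> c by (simp add: \<tau>_def)
  have "2 * \<tau> * norm v < \<tau> * c" using \<tau> by (simp add: c_def algebra_simps)
  also have "\<dots> = \<delta>" using c by (simp add: \<tau>_def)
  finally have \<tau>_small: "2 * \<tau> * norm v < \<delta>" .
  define q where "q = w + \<tau> *\<^sub>R v"
  obtain p r pb where p: "\<And>k. p k \<in> Sk k" and nearest: "\<And>k. \<forall>z\<in>Sk k. dist q (p k) \<le> dist q z"
    and r: "strict_mono r" and p_lim: "(p \<circ> r) \<longlonglongrightarrow> pb" and pbA: "pb \<in> A"
    and "dist q pb \<le> dist q w"
    using nearest_points_cluster_in_outer_limit[OF closed wk wk_lim outer_limit] by blast
  then have closer: "dist q pb \<le> \<tau> * norm v"
    using \<tau> by (simp add: q_def dist_norm)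
  have "norm (pb - w) \<le> dist pb q + dist q w"
    using dist_triangle[of pb w q] by (simp add: dist_norm)
  also have "\<dots> \<le> 2 * \<tau> * norm v"
    using closer \<tau> by (simp add: dist_commute q_def dist_norm)
  finally have "inner v (pb - w) \<le> (\<epsilon>/3) * norm (pb - w)"
    using frechet pbA \<tau>_small by auto
  from proximal_normal_estimate[OF this closer[unfolded q_def] \<tau>]
  have limit_close: "dist ((1/\<tau>) *\<^sub>R (q - pb)) v \<le> 2 * (\<epsilon>/3)"
    using \<epsilon> by (simp add: q_def dist_norm)
  have "((\<lambda>k. (1/\<tau>) *\<^sub>R (q - p (r k))) \<longlongrightarrow> (1/\<tau>) *\<^sub>R (q - pb)) sequentially"
    using p_lim by (intro tendsto_intros) (simp add: comp_def)
  then have "\<forall>\<^sub>F k in sequentially. dist ((1/\<tau>) *\<^sub>R (q - p (r k))) ((1/\<tau>) *\<^sub>R (q - pb)) < \<epsilon>/3"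
    using tendstoD[OF _ divide_pos_pos[OF \<epsilon>, of 3]] by simp
  then have "\<forall>\<^sub>F k in sequentially. dist ((1/\<tau>) *\<^sub>R (q - p (r k))) v < \<epsilon>"
  proof eventually_elim
    case (elim k)
    then show ?case
      using dist_triangle[of "(1/\<tau>) *\<^sub>R (q - p (r k))" v "(1/\<tau>) *\<^sub>R (q - pb)"] limit_close
      by linarith
  qed
  then have "\<forall>\<^sub>F k in sequentially. \<exists>u. dist u v < \<epsilon> \<and> u \<in> frechet_normal_cone (Sk (r k)) (p (r k))"
    by eventually_elim (use proximal_normal_in_frechet_normal_cone[OF p nearest \<tau>] in blast)
  with r p p_lim show ?thesis
    by (intro that[of r "\<lambda>k. p (r k)" pb]) (simp_all add: comp_def)
qed

lemma directional_normal_cone_iff: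
  "v \<in> directional_normal_cone S x d \<longleftrightarrow>
    (\<forall>\<epsilon>>0. \<forall>\<eta>>0. \<exists>t d' u. 0 < t \<and> t < \<eta> \<and> dist d' d < \<epsilon> \<and> dist u v < \<epsilon> \<and>
       u \<in> frechet_normal_cone S (x + t *\<^sub>R d'))"
  (is "_ \<longleftrightarrow> (\<forall>\<epsilon>>0. \<forall>\<eta>>0. \<exists>t d' u. ?near \<epsilon> \<eta> t d' u)")
proof
  assume "v \<in> directional_normal_cone S x d"
  then obtain t dk vk where t: "\<And>k. t k > 0" "t \<longlonglongrightarrow> 0" and lim: "dk \<longlonglongrightarrow> d" "vk \<longlonglongrightarrow> v"
    and normal: "\<And>k. vk k \<in> frechet_normal_cone S (x + t k *\<^sub>R dk k)"
    unfolding directional_normal_cone_def by blast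
  show "\<forall>\<epsilon>>0. \<forall>\<eta>>0. \<exists>t d' u. ?near \<epsilon> \<eta> t d' u"
  proof (intro allI impI)
    fix \<epsilon> \<eta> :: real assume "\<epsilon> > 0" "\<eta> > 0"
    then have "\<forall>\<^sub>F k in sequentially. dist (t k) 0 < \<eta> \<and> dist (dk k) d < \<epsilon> \<and> dist (vk k) v < \<epsilon>"
      by (intro eventually_conj tendstoD[OF t(2)] tendstoD[OF lim(1)] tendstoD[OF lim(2)])
    then obtain k where "dist (t k) 0 < \<eta>" "dist (dk k) d < \<epsilon>" "dist (vk k) v < \<epsilon>"
      using eventually_happens'[OF sequentially_bot] by blast
    moreover have "t k < \<eta>" using calculation(1) by (simp add: dist_real_def)
    ultimately show "\<exists>t d' u. ?near \<epsilon> \<eta> t d' u" using t(1) normal by blast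
  qed
next
  assume near: "\<forall>\<epsilon>>0. \<forall>\<eta>>0. \<exists>t d' u. ?near \<epsilon> \<eta> t d' u"
  have "\<forall>k. \<exists>z. ?near (1 / Suc k) (1 / Suc k) (fst z) (fst (snd z)) (snd (snd z))"
    using near by (metis of_nat_0_less_iff zero_less_Suc zero_less_divide_1_iff fst_conv snd_conv)
  then obtain z where z: "\<And>k. ?near (1 / Suc k) (1 / Suc k) (fst (z k)) (fst (snd (z k))) (snd (snd (z k)))"
    by metis
  define t dk vk where "t k = fst (z k)" and "dk k = fst (snd (z k))" and "vk k = snd (snd (z k))"
    for k
  have bounds: "norm (t k) < 1 / Suc k" "norm (dk k - d) < 1 / Suc k" "norm (vk k - v) < 1 / Suc k"
    for k using z[of k] by (simp_all add: t_def dk_def vk_def dist_norm)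
  have "t \<longlonglongrightarrow> 0" "dk \<longlonglongrightarrow> d" "vk \<longlonglongrightarrow> v"
    using LIMSEQ_norm_0[OF bounds(1)] LIM_zero_cancel[OF LIMSEQ_norm_0[OF bounds(2)]]
      LIM_zero_cancel[OF LIMSEQ_norm_0[OF bounds(3)]] by simp_all
  moreover have "t k > 0" "vk k \<in> frechet_normal_cone S (x + t k *\<^sub>R dk k)" for k
    using z[of k] by (simp_all add: t_def dk_def vk_def)
  ultimately show "v \<in> directional_normal_cone S x d"
    unfolding directional_normal_cone_def by blast
qed

lemma closed_directional_normal_cone: "closed (directional_normal_cone S x d)"
  unfolding closed_sequential_limits
proof (intro allI impI, elim conjE)
  fix vs v assume vs: "\<forall>n. vs n \<in> directional_normal_cone S x d" and lim: "vs \<longlonglongrightarrow> v"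
  show "v \<in> directional_normal_cone S x d"
    unfolding directional_normal_cone_iff
  proof (intro allI impI)
    fix \<epsilon> \<eta> :: real assume \<epsilon>: "\<epsilon> > 0" and \<eta>: "\<eta> > 0"
    obtain n where n: "dist (vs n) v < \<epsilon>/2"
      using tendstoD[OF lim, of "\<epsilon>/2"] \<epsilon> eventually_sequentially by auto
    obtain t d' u where t: "0 < t" "t < \<eta>" and d': "dist d' d < \<epsilon>/2"
      and u: "dist u (vs n) < \<epsilon>/2" "u \<in> frechet_normal_cone S (x + t *\<^sub>R d')"
      using vs[rule_format, of n, unfolded directional_normal_cone_iff] \<epsilon> \<eta> by (meson half_gt_zero)
    have "dist d' d < \<epsilon>" using d' \<epsilon> by linarith
    moreover have "dist u v < \<epsilon>" using dist_triangle[of u v "vs n"] n u(1) by linarith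
    ultimately show "\<exists>t d' u. 0 < t \<and> t < \<eta> \<and> dist d' d < \<epsilon> \<and> dist u v < \<epsilon> \<and>
        u \<in> frechet_normal_cone S (x + t *\<^sub>R d')"
      using t u(2) by blast
  qed
qed

lemma limiting_normal_cone_subset_closed:
  assumes "closed C" and "\<And>y. frechet_normal_cone A y \<subseteq> C"
  shows "limiting_normal_cone A w \<subseteq> C"
proof
  fix v assume "v \<in> limiting_normal_cone A w"
  then obtain xk vk where "\<And>k. vk k \<in> frechet_normal_cone A (xk k)" and "vk \<longlonglongrightarrow> v"
    unfolding limiting_normal_cone_def by blast
  with assms show "v \<in> C"
    using closed_sequentially[of C vk v] by blast
qed

text \<open>Both second-order sets consist of the limits of \<open>w\<^sub>k\<close> with
  \<open>x + t\<^sub>k d + t\<^sub>k s\<^sub>k w\<^sub>k \<in> S\<close>, where the rate pair \<open>(t, s)\<close> ranges over a family \<open>G\<close>: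
  \<open>s = t/2\<close> for \<open>T\<^sup>2\<close>, and \<open>s = r/2\<close> with \<open>t/r \<rightarrow> 0\<close> for \<open>T''\<close>.\<close>

type_synonym rates = "(nat \<Rightarrow> real) \<times> (nat \<Rightarrow> real)"

definition tangent_set_at_rates :: "'a::euclidean_space set \<Rightarrow> 'a \<Rightarrow> 'a \<Rightarrow> rates set \<Rightarrow> 'a set" where
  "tangent_set_at_rates S x d G = {w. \<exists>t s wk. (t, s) \<in> G \<and> wk \<longlonglongrightarrow> w \<and>
      (\<forall>k. x + t k *\<^sub>R d + (t k * s k) *\<^sub>R wk k \<in> S)}"

definition admissible_rates :: "rates set \<Rightarrow> bool" where
  "admissible_rates G \<longleftrightarrow>
    (\<forall>t s. (t, s) \<in> G \<longrightarrow> (\<forall>k. t k > 0 \<and> s k > 0) \<and> t \<longlonglongrightarrow> 0 \<and> s \<longlonglongrightarrow> 0) \<and>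
    (\<forall>t s r. (t, s) \<in> G \<longrightarrow> strict_mono r \<longrightarrow> (t \<circ> r, s \<circ> r) \<in> G)"

lemma tangent_set_at_rates_subseqI:
  assumes G: "admissible_rates G" and "(t, s) \<in> G" and r: "strict_mono r"
    and mem: "\<And>k. x + t (r k) *\<^sub>R d + (t (r k) * s (r k)) *\<^sub>R p k \<in> S" and "p \<longlonglongrightarrow> w"
  shows "w \<in> tangent_set_at_rates S x d G"
proof -
  have "(t \<circ> r, s \<circ> r) \<in> G" using G \<open>(t, s) \<in> G\<close> r unfolding admissible_rates_def by blast
  with mem \<open>p \<longlonglongrightarrow> w\<close> show ?thesis
    unfolding tangent_set_at_rates_def by fastforce
qed

lemma frechet_normal_cone_tangent_set_at_rates_subset:
  fixes S :: "'a::euclidean_space set"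
  assumes S: "closed S" and G: "admissible_rates G"
  shows "frechet_normal_cone (tangent_set_at_rates S x d G) w \<subseteq> directional_normal_cone S x d"
proof
  let ?A = "tangent_set_at_rates S x d G"
  fix v assume v: "v \<in> frechet_normal_cone ?A w"
  then have "w \<in> ?A" by (rule frechet_normal_cone_imp_mem)
  then obtain T \<sigma> wk where T\<sigma>: "(T, \<sigma>) \<in> G" and wk: "wk \<longlonglongrightarrow> w"
    and mem: "\<And>k. x + T k *\<^sub>R d + (T k * \<sigma> k) *\<^sub>R wk k \<in> S"
    unfolding tangent_set_at_rates_def by blast
  have pos: "\<And>k. T k > 0 \<and> \<sigma> k > 0" and T: "T \<longlonglongrightarrow> 0" and \<sigma>: "\<sigma> \<longlonglongrightarrow> 0"
    using G T\<sigma> unfolding admissible_rates_def by blast+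
  define Sk where "Sk k = (\<lambda>y. (x + T k *\<^sub>R d) + (T k * \<sigma> k) *\<^sub>R y) -` S" for k
  have closed_Sk: "closed (Sk k)" for k
    unfolding Sk_def by (rule continuous_closed_vimage[OF S]) (intro continuous_intros)
  have wk_Sk: "wk k \<in> Sk k" for k
    using mem by (simp add: Sk_def)
  have outer_limit: "\<forall>r p pb. strict_mono r \<and> (\<forall>k. p k \<in> Sk (r k)) \<and> p \<longlonglongrightarrow> pb \<longrightarrow> pb \<in> ?A"
    by (auto simp: Sk_def intro: tangent_set_at_rates_subseqI[OF G T\<sigma>])
  show "v \<in> directional_normal_cone S x d"
    unfolding directional_normal_cone_iff
  proof (intro allI impI)
    fix \<epsilon> \<eta> :: real assume \<epsilon>: "\<epsilon> > 0" and \<eta>: "\<eta> > 0"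
    obtain r p pb where r: "strict_mono r" and p: "\<And>k. p k \<in> Sk (r k)" and p_lim: "p \<longlonglongrightarrow> pb"
      and normals: "\<forall>\<^sub>F k in sequentially. \<exists>u. dist u v < \<epsilon> \<and> u \<in> frechet_normal_cone (Sk (r k)) (p k)"
      using frechet_normal_approx_by_proximal_normals[OF closed_Sk wk_Sk wk outer_limit v \<epsilon>] by blast
    have "(\<lambda>k. T (r k)) \<longlonglongrightarrow> 0" "(\<lambda>k. d + \<sigma> (r k) *\<^sub>R p k) \<longlonglongrightarrow> d"
      using LIMSEQ_subseq_LIMSEQ[OF T r] tendsto_add[OF tendsto_const tendsto_scaleR[OF
          LIMSEQ_subseq_LIMSEQ[OF \<sigma> r] p_lim]] by (simp_all add: comp_def)
    then have "\<forall>\<^sub>F k in sequentially. dist (T (r k)) 0 < \<eta> \<and> dist (d + \<sigma> (r k) *\<^sub>R p k) d < \<epsilon> \<and>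
        (\<exists>u. dist u v < \<epsilon> \<and> u \<in> frechet_normal_cone (Sk (r k)) (p k))"
      using \<epsilon> \<eta> normals by (intro eventually_conj tendstoD)
    then obtain k where k: "dist (T (r k)) 0 < \<eta>" "dist (d + \<sigma> (r k) *\<^sub>R p k) d < \<epsilon>"
      and "\<exists>u. dist u v < \<epsilon> \<and> u \<in> frechet_normal_cone (Sk (r k)) (p k)"
      using eventually_happens'[OF sequentially_bot] by blast
    then obtain u where u: "dist u v < \<epsilon>" "u \<in> frechet_normal_cone (Sk (r k)) (p k)"
      by blast
    have "u \<in> frechet_normal_cone S ((x + T (r k) *\<^sub>R d) + (T (r k) * \<sigma> (r k)) *\<^sub>R p k)"
      using frechet_normal_cone_affine_vimage[of "T (r k) * \<sigma> (r k)"] u(2) pos by (simp add: Sk_def)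
    moreover have "(x + T (r k) *\<^sub>R d) + (T (r k) * \<sigma> (r k)) *\<^sub>R p k = x + T (r k) *\<^sub>R (d + \<sigma> (r k) *\<^sub>R p k)"
      by (simp add: algebra_simps)
    ultimately show "\<exists>t d' u. 0 < t \<and> t < \<eta> \<and> dist d' d < \<epsilon> \<and> dist u v < \<epsilon> \<and>
        u \<in> frechet_normal_cone S (x + t *\<^sub>R d')"
      using k u(1) pos by (intro exI[of _ "T (r k)"] exI[of _ "d + \<sigma> (r k) *\<^sub>R p k"] exI[of _ u])
        (simp add: dist_real_def)
  qed
qed

definition second_order_rates :: "rates set" where
  "second_order_rates = {(t, \<lambda>k. t k / 2) | t. (\<forall>k. t k > 0) \<and> t \<longlonglongrightarrow> 0}"

definition asymptotic_second_order_rates :: "rates set" where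
  "asymptotic_second_order_rates = {(t, \<lambda>k. r k / 2) | t r. (\<forall>k. t k > 0 \<and> r k > 0) \<and>
      t \<longlonglongrightarrow> 0 \<and> r \<longlonglongrightarrow> 0 \<and> (\<lambda>k. t k / r k) \<longlonglongrightarrow> 0}"

lemma admissible_second_order_rates: "admissible_rates second_order_rates"
proof -
  have "(\<forall>k. t k > 0 \<and> s k > 0) \<and> t \<longlonglongrightarrow> 0 \<and> s \<longlonglongrightarrow> 0 \<and>
      (\<forall>r. strict_mono r \<longrightarrow> (t \<circ> r, s \<circ> r) \<in> second_order_rates)"
    if "(t, s) \<in> second_order_rates" for t s
  proof -
    have s: "s = (\<lambda>k. t k / 2)" and t: "\<forall>k. t k > 0" "t \<longlonglongrightarrow> 0"
      using that unfolding second_order_rates_def by auto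
    have "(t \<circ> r, s \<circ> r) \<in> second_order_rates" if "strict_mono r" for r
      unfolding second_order_rates_def
      using t LIMSEQ_subseq_LIMSEQ[OF t(2) that] by (auto simp: s comp_def)
    then show ?thesis
      using t tendsto_divide[OF t(2) tendsto_const, of 2] by (simp add: s)
  qed
  then show ?thesis
    unfolding admissible_rates_def by blast
qed

lemma admissible_asymptotic_second_order_rates: "admissible_rates asymptotic_second_order_rates"
proof -
  have "(\<forall>k. t k > 0 \<and> s k > 0) \<and> t \<longlonglongrightarrow> 0 \<and> s \<longlonglongrightarrow> 0 \<and>
      (\<forall>r. strict_mono r \<longrightarrow> (t \<circ> r, s \<circ> r) \<in> asymptotic_second_order_rates)"
    if ts: "(t, s) \<in> asymptotic_second_order_rates" for t s
  proof -
    obtain \<rho> where s: "s = (\<lambda>k. \<rho> k / 2)" and pos: "\<forall>k. t k > 0 \<and> \<rho> k > 0"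
      and lim: "t \<longlonglongrightarrow> 0" "\<rho> \<longlonglongrightarrow> 0" "(\<lambda>k. t k / \<rho> k) \<longlonglongrightarrow> 0"
      using ts unfolding asymptotic_second_order_rates_def by blast
    have "(t \<circ> r, s \<circ> r) \<in> asymptotic_second_order_rates" if "strict_mono r" for r
      unfolding asymptotic_second_order_rates_def
      using pos LIMSEQ_subseq_LIMSEQ[OF lim(1) that] LIMSEQ_subseq_LIMSEQ[OF lim(2) that]
        LIMSEQ_subseq_LIMSEQ[OF lim(3) that]
      by (intro CollectI exI[of _ "t \<circ> r"] exI[of _ "\<rho> \<circ> r"]) (auto simp: s comp_def)
    then show ?thesis
      using pos lim tendsto_divide[OF lim(2) tendsto_const, of 2] by (simp add: s)
  qed
  then show ?thesis
    unfolding admissible_rates_def by blast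
qed

lemma second_tangent_set_eq_tangent_set_at_rates:
  "second_tangent_set S x d = tangent_set_at_rates S x d second_order_rates"
proof -
  have "t k * (t k / 2) = (1/2) * (t k)\<^sup>2" for t :: "nat \<Rightarrow> real" and k
    by (simp add: power2_eq_square)
  then show ?thesis
    unfolding second_tangent_set_def tangent_set_at_rates_def second_order_rates_def by auto
qed

lemma asymptotic_second_tangent_cone_eq_tangent_set_at_rates:
  "asymptotic_second_tangent_cone S x d = tangent_set_at_rates S x d asymptotic_second_order_rates"
proof (intro set_eqI iffI)
  fix w assume "w \<in> asymptotic_second_tangent_cone S x d"
  then obtain t r wk where "(t, \<lambda>k. r k / 2) \<in> asymptotic_second_order_rates"
    and "wk \<longlonglongrightarrow> w" "\<forall>k. x + t k *\<^sub>R d + ((1/2) * t k * r k) *\<^sub>R wk k \<in> S"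
    unfolding asymptotic_second_tangent_cone_def asymptotic_second_order_rates_def by blast
  moreover have "t k * (r k / 2) = (1/2) * t k * r k" for k by simp
  ultimately show "w \<in> tangent_set_at_rates S x d asymptotic_second_order_rates"
    unfolding tangent_set_at_rates_def by (intro CollectI exI[of _ t] exI[of _ "\<lambda>k. r k / 2"]) auto
next
  fix w assume "w \<in> tangent_set_at_rates S x d asymptotic_second_order_rates"
  then obtain t r wk where "(\<forall>k. t k > 0 \<and> r k > 0) \<and> t \<longlonglongrightarrow> 0 \<and> r \<longlonglongrightarrow> 0 \<and> (\<lambda>k. t k / r k) \<longlonglongrightarrow> 0"
    and "wk \<longlonglongrightarrow> w" "\<forall>k. x + t k *\<^sub>R d + (t k * (r k / 2)) *\<^sub>R wk k \<in> S"
    unfolding tangent_set_at_rates_def asymptotic_second_order_rates_def by blast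
  moreover have "t k * (r k / 2) = (1/2) * t k * r k" for k by simp
  ultimately show "w \<in> asymptotic_second_tangent_cone S x d"
    unfolding asymptotic_second_tangent_cone_def by auto
qed

theorem lemma2p4:
  fixes S :: "'a::euclidean_space set" and x d :: 'a
  assumes "closed S" and "x \<in> S" and "d \<in> tangent_cone S x"
  shows "(\<forall>w\<in>second_tangent_set S x d.
            limiting_normal_cone (second_tangent_set S x d) w \<subseteq> directional_normal_cone S x d)
       \<and> (\<forall>w\<in>asymptotic_second_tangent_cone S x d.
            limiting_normal_cone (asymptotic_second_tangent_cone S x d) w \<subseteq> directional_normal_cone S x d)"
proof -
  have "limiting_normal_cone (tangent_set_at_rates S x d G) w \<subseteq> directional_normal_cone S x d"
    if "admissible_rates G" for G w
    using closed_directional_normal_cone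
      frechet_normal_cone_tangent_set_at_rates_subset[OF \<open>closed S\<close> that]
    by (rule limiting_normal_cone_subset_closed)
  then show ?thesis
    unfolding second_tangent_set_eq_tangent_set_at_rates
      asymptotic_second_tangent_cone_eq_tangent_set_at_rates
    using admissible_second_order_rates admissible_asymptotic_second_order_rates by blast
qed

end
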